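(* Let $\mathcal H$ be a real Hilbert space and let $\Phi:\mathbb R\to\mathcal H$ be a differentiable map with Lipschitz-continuous differential (so the number of parameters is $W=1$). For a target $\mathbf f\in\mathcal H$ let $L_{\mathbf f}(w)=\frac12\|\mathbf f-\Phi(w)\|^2$ and let $w(t)$, $t\ge 0$, be the solution of the gradient flow $\frac{dw}{dt}=-\frac{d}{dw}L_{\mathbf f}(w(t))$ with $w(0)=0$. Let $F_\Phi=\{\mathbf f\in\mathcal H:\inf_{t\ge0}L_{\mathbf f}(w(t))=0\}$. If $\mathbf f\in F_\Phi$, then either $\mathbf f=\Phi(w)$ for some $w\in\mathbb R$, or $\mathbf f\in\{\mathbf f_-,\mathbf f_+\}$, where $\mathbf f_\pm=\lim_{w\to\pm\infty}\Phi(w)$ (whenever these limits exist). In particular, if $\mathcal H=\mathbb R^d$ with $2\le d<\infty$, then $F_\Phi$ has Lebesgue measure $0$ in $\mathcal H$.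
   Context: The gradient flow solution exists and is unique for all $t\ge0$ under the stated regularity of $\Phi$. Elements of $F_\Phi$ are called GF-learnable targets. *)

theory Defs
  imports "HOL-Analysis.Analysis"
begin

definition gf_loss :: "(real \<Rightarrow> 'a::real_normed_vector) \<Rightarrow> 'a \<Rightarrow> real \<Rightarrow> real" where
  "gf_loss \<Phi> f v = (1/2) * (norm (f - \<Phi> v))\<^sup>2"

definition gf_solution :: "(real \<Rightarrow> 'a::real_normed_vector) \<Rightarrow> 'a \<Rightarrow> (real \<Rightarrow> real) \<Rightarrow> bool" where
  "gf_solution \<Phi> f w \<longleftrightarrow> w 0 = 0 \<and>
     (\<forall>t\<ge>0. (w has_real_derivative (- deriv (gf_loss \<Phi> f) (w t))) (at t within {0..}))"

text \<open>The set F_Phi of GF-learnable targets (the flow solution is unique).\<close>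
definition GF_learnable :: "(real \<Rightarrow> 'a::real_normed_vector) \<Rightarrow> 'a set" where
  "GF_learnable \<Phi> = {f. \<exists>w. gf_solution \<Phi> f w \<and> (INF t\<in>{0..}. gf_loss \<Phi> f (w t)) = 0}"

end

theory Submission
  imports Defs
begin

text \<open>The loss decreases along the flow, and since there is a single parameter the trajectory
  \<open>w([0,\<infinity>))\<close> is an interval containing \<open>0\<close>. If this interval is bounded, the continuous loss
  attains a minimum on its closure, which must be \<open>0\<close>, so \<open>f\<close> lies on the curve \<open>\<Phi>\<close>. If it is
  unbounded above, then every \<open>v\<close> beyond the range of \<open>w\<close> on \<open>[0,T]\<close> is visited at some time
  \<open>t \<ge> T\<close>, so \<open>L\<^sub>f(v) \<le> L\<^sub>f(w(T))\<close>; hence \<open>L\<^sub>f \<rightarrow> 0\<close> at \<open>+\<infinity>\<close>, i.e. \<open>\<Phi> \<rightarrow> f\<close>; symmetrically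
  at \<open>-\<infinity>\<close>. In \<open>\<real>\<^sup>d\<close>, \<open>d \<ge> 2\<close>, the learnable targets thus lie in the image of a differentiable
  curve plus two points, a null set.\<close>

lemma has_real_derivative_gf_loss:
  fixes \<Phi> \<Phi>' :: "real \<Rightarrow> 'a::real_inner"
  assumes "(\<Phi> has_vector_derivative \<Phi>' v) (at v)"
  shows "(gf_loss \<Phi> f has_real_derivative inner (\<Phi> v - f) (\<Phi>' v)) (at v)"
proof -
  have loss: "gf_loss \<Phi> f = (\<lambda>x. (1/2) * inner (f - \<Phi> x) (f - \<Phi> x))"
    by (auto simp: gf_loss_def power2_norm_eq_inner fun_eq_iff)
  have "((\<lambda>x. f - \<Phi> x) has_derivative (\<lambda>h. - (h *\<^sub>R \<Phi>' v))) (at v)"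
    using assms unfolding has_vector_derivative_def by (auto intro!: derivative_eq_intros)
  then have "((\<lambda>x. (1/2) * inner (f - \<Phi> x) (f - \<Phi> x)) has_derivative
      (\<lambda>h. (1/2) * (inner (f - \<Phi> v) (- (h *\<^sub>R \<Phi>' v)) + inner (- (h *\<^sub>R \<Phi>' v)) (f - \<Phi> v)))) (at v)"
    by (intro has_derivative_mult_right has_derivative_inner)
  moreover have "(\<lambda>h. (1/2) * (inner (f - \<Phi> v) (- (h *\<^sub>R \<Phi>' v)) + inner (- (h *\<^sub>R \<Phi>' v)) (f - \<Phi> v)))
      = (\<lambda>h. inner (\<Phi> v - f) (\<Phi>' v) * h)"
    by (auto simp: fun_eq_iff inner_commute algebra_simps)
  ultimately show ?thesis
    unfolding loss has_field_derivative_def by simp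
qed

lemma gf_solution_continuous_on:
  assumes "gf_solution \<Phi> f w"
  shows "continuous_on {0..} w"
  using assms unfolding gf_solution_def continuous_on_eq_continuous_within
  by (auto intro: DERIV_continuous)

lemma gf_loss_antimono_on_solution:
  fixes \<Phi> \<Phi>' :: "real \<Rightarrow> 'a::real_inner"
  assumes d\<Phi>: "\<And>v. (\<Phi> has_vector_derivative \<Phi>' v) (at v)"
    and sol: "gf_solution \<Phi> f w"
  shows "antimono_on {0..} (\<lambda>t. gf_loss \<Phi> f (w t))"
proof (rule monotone_onI)
  fix a b :: real
  assume "a \<in> {0..}" "b \<in> {0..}" "a \<le> b"
  define D where "D v = inner (\<Phi> v - f) (\<Phi>' v)" for v
  have dL: "(gf_loss \<Phi> f has_real_derivative D v) (at v)" for v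
    unfolding D_def by (rule has_real_derivative_gf_loss[OF d\<Phi>])
  have dw: "(w has_real_derivative - D (w t)) (at t within {0..})" if "t \<ge> 0" for t
    using sol that DERIV_imp_deriv[OF dL] unfolding gf_solution_def by simp
  have dLw: "((\<lambda>t. gf_loss \<Phi> f (w t)) has_real_derivative - (D (w t))\<^sup>2) (at t)" if "t > 0" for t
  proof -
    have "at t within {0..} = at t"
      using that by (intro at_within_interior) auto
    then show ?thesis
      using DERIV_chain2[OF dL dw, of t] that by (simp add: power2_eq_square)
  qed
  have "continuous_on UNIV (gf_loss \<Phi> f)"
    using dL by (meson DERIV_isCont continuous_at_imp_continuous_on)
  moreover have "continuous_on {a..b} w"
    using \<open>a \<in> {0..}\<close> by (intro continuous_on_subset[OF gf_solution_continuous_on[OF sol]]) auto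
  ultimately have "continuous_on {a..b} (\<lambda>t. gf_loss \<Phi> f (w t))"
    by (rule continuous_on_compose2) auto
  then show "gf_loss \<Phi> f (w b) \<le> gf_loss \<Phi> f (w a)"
  proof (rule DERIV_nonpos_imp_decreasing_open[OF \<open>a \<le> b\<close>, rotated])
    fix x
    assume "a < x" "x < b"
    then show "\<exists>y. ((\<lambda>t. gf_loss \<Phi> f (w t)) has_real_derivative y) (at x) \<and> y \<le> 0"
      using dLw[of x] \<open>a \<in> {0..}\<close> by (intro exI[of _ "- (D (w x))\<^sup>2"]) auto
  qed
qed

lemma eventually_at_top_le_along_descending_curve:
  fixes g w :: "real \<Rightarrow> real"
  assumes w: "continuous_on {0..} w"
    and descent: "antimono_on {0..} (\<lambda>t. g (w t))"
    and unbounded: "\<not> bdd_above (w ` {0..})"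
    and "T \<ge> 0"
  shows "eventually (\<lambda>v. g v \<le> g (w T)) at_top"
proof -
  have w_T: "continuous_on {0..T} w"
    using w by (rule continuous_on_subset) auto
  obtain M where M: "\<And>t. t \<in> {0..T} \<Longrightarrow> w t \<le> M"
    using continuous_attains_sup[OF compact_Icc _ w_T] \<open>T \<ge> 0\<close>
    by (auto simp del: atLeastAtMost_iff)
  have "g v \<le> g (w T)" if "M < v" for v
  proof -
    have "\<exists>s\<ge>0. v < w s"
    proof (rule ccontr)
      assume "\<not> (\<exists>s\<ge>0. v < w s)"
      then have "bdd_above (w ` {0..})"
        by (intro bdd_above.I2[of _ _ v]) (auto simp: not_less)
      with unbounded show False ..
    qed
    then obtain s where s: "s \<ge> 0" "v < w s"
      by blast
    then have "T \<le> s"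
      using M[of s] \<open>M < v\<close> by (cases "s \<le> T") auto
    moreover have "w T \<le> v"
      using M[of T] \<open>T \<ge> 0\<close> \<open>M < v\<close> by simp
    moreover have "continuous_on {T..s} w"
      using \<open>T \<ge> 0\<close> by (intro continuous_on_subset[OF w]) auto
    ultimately obtain t where t: "T \<le> t" "w t = v"
      using IVT'[of w T v s] s by auto
    then have "g v = g (w t)"
      by simp
    also have "\<dots> \<le> g (w T)"
      using monotone_onD[OF descent, of T t] \<open>T \<ge> 0\<close> t by simp
    finally show ?thesis .
  qed
  then show ?thesis
    by (rule eventually_mono[OF eventually_gt_at_top[of M]])
qed

lemma tendsto_zero_at_top_along_descending_curve:
  fixes g w :: "real \<Rightarrow> real"
  assumes "continuous_on {0..} w"
    and "antimono_on {0..} (\<lambda>t. g (w t))"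
    and "\<not> bdd_above (w ` {0..})"
    and nonneg: "\<And>v. 0 \<le> g v"
    and inf: "(INF t\<in>{0..}. g (w t)) = 0"
  shows "(g \<longlongrightarrow> 0) at_top"
proof (rule order_tendstoI)
  fix e :: real
  assume "0 < e"
  have "bdd_below ((\<lambda>t. g (w t)) ` {0..})"
    by (rule bdd_belowI2[of _ 0]) (rule nonneg)
  moreover have "(INF t\<in>{0..}. g (w t)) < e"
    using inf \<open>0 < e\<close> by simp
  ultimately obtain T where "T \<in> {0..}" "g (w T) < e"
    using cINF_less_iff[of "{0..}" "\<lambda>t. g (w t)" e] by blast
  then have "T \<ge> 0" by simp
  have "eventually (\<lambda>v. g v \<le> g (w T)) at_top"
    by (rule eventually_at_top_le_along_descending_curve) fact+
  then show "eventually (\<lambda>v. g v < e) at_top"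
    by (rule eventually_mono) (use \<open>g (w T) < e\<close> in simp)
next
  fix e :: real
  assume "e < 0"
  then have "e < g v" for v
    using nonneg[of v] by linarith
  then show "eventually (\<lambda>v. e < g v) at_top"
    by simp
qed

lemma tendsto_zero_along_descending_curve_cases:
  fixes g w :: "real \<Rightarrow> real"
  assumes g: "continuous_on UNIV g"
    and nonneg: "\<And>v. 0 \<le> g v"
    and w: "continuous_on {0..} w"
    and descent: "antimono_on {0..} (\<lambda>t. g (w t))"
    and inf: "(INF t\<in>{0..}. g (w t)) = 0"
  shows "(\<exists>v. g v = 0) \<or> (g \<longlongrightarrow> 0) at_bot \<or> (g \<longlongrightarrow> 0) at_top"
proof -
  consider "\<not> bdd_above (w ` {0..})" | "\<not> bdd_below (w ` {0..})"
    | "bdd_above (w ` {0..})" "bdd_below (w ` {0..})"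
    by blast
  then show ?thesis
  proof cases
    case 1
    show ?thesis
      using tendsto_zero_at_top_along_descending_curve[OF w descent 1 nonneg inf] by simp
  next
    case 2
    have "((\<lambda>v. g (- v)) \<longlongrightarrow> 0) at_top"
    proof (rule tendsto_zero_at_top_along_descending_curve[of "\<lambda>t. - w t"])
      show "continuous_on {0..} (\<lambda>t. - w t)"
        using w by (rule continuous_on_minus)
      show "\<not> bdd_above ((\<lambda>t. - w t) ` {0..})"
        using 2 by (simp add: bdd_above_uminus_image)
    qed (use descent nonneg inf in simp_all)
    then show ?thesis
      by (simp add: filterlim_at_bot_mirror)
  next
    case 3
    obtain A B where "\<forall>x\<in>w ` {0..}. A \<le> x" "\<forall>x\<in>w ` {0..}. x \<le> B"
      using 3 unfolding bdd_above_def bdd_below_def by blast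
    then have AB: "w s \<in> {A..B}" if "s \<ge> 0" for s
      using that by simp
    obtain x where "\<And>y. y \<in> {A..B} \<Longrightarrow> g x \<le> g y"
      using continuous_attains_inf[OF compact_Icc _ continuous_on_subset[OF g]] AB[of 0] by blast
    then have "g x \<le> (INF t\<in>{0..}. g (w t))"
      using AB by (intro cINF_greatest) auto
    then show ?thesis
      using inf nonneg[of x] by auto
  qed
qed

lemma tendsto_of_gf_loss_tendsto_zero:
  fixes \<Phi> :: "real \<Rightarrow> 'a::real_normed_vector"
  assumes "(gf_loss \<Phi> f \<longlongrightarrow> 0) F"
  shows "(\<Phi> \<longlongrightarrow> f) F"
proof -
  have "norm (\<Phi> v - f) = sqrt (2 * gf_loss \<Phi> f v)" for v
    by (simp add: gf_loss_def norm_minus_commute)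
  moreover have "((\<lambda>v. sqrt (2 * gf_loss \<Phi> f v)) \<longlongrightarrow> 0) F"
    using tendsto_real_sqrt[OF tendsto_mult_right_zero[OF assms, of 2]] by simp
  ultimately have "((\<lambda>v. norm (\<Phi> v - f)) \<longlongrightarrow> 0) F"
    by simp
  then show ?thesis
    by (simp add: tendsto_norm_zero_iff LIM_zero_iff)
qed

lemma GF_learnable_cases:
  fixes \<Phi> \<Phi>' :: "real \<Rightarrow> 'a::real_inner"
  assumes d\<Phi>: "\<And>v. (\<Phi> has_vector_derivative \<Phi>' v) (at v)"
    and "f \<in> GF_learnable \<Phi>"
  shows "(\<exists>v. f = \<Phi> v) \<or> (\<Phi> \<longlongrightarrow> f) at_bot \<or> (\<Phi> \<longlongrightarrow> f) at_top"
proof -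
  obtain w where sol: "gf_solution \<Phi> f w" and inf: "(INF t\<in>{0..}. gf_loss \<Phi> f (w t)) = 0"
    using assms(2) unfolding GF_learnable_def by blast
  have "isCont (gf_loss \<Phi> f) v" for v
    by (rule DERIV_isCont[OF has_real_derivative_gf_loss[OF d\<Phi>]])
  then have "continuous_on UNIV (gf_loss \<Phi> f)"
    by (rule continuous_at_imp_continuous_on[rule_format])
  then have "(\<exists>v. gf_loss \<Phi> f v = 0) \<or> (gf_loss \<Phi> f \<longlongrightarrow> 0) at_bot \<or> (gf_loss \<Phi> f \<longlongrightarrow> 0) at_top"
    using gf_solution_continuous_on[OF sol] gf_loss_antimono_on_solution[OF d\<Phi> sol] inf
    by (intro tendsto_zero_along_descending_curve_cases) (auto simp: gf_loss_def)
  then show ?thesis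
    by (auto simp: gf_loss_def dest: tendsto_of_gf_loss_tendsto_zero)
qed

lemma GF_learnable_subset:
  fixes \<Phi> \<Phi>' :: "real \<Rightarrow> 'a::real_inner"
  assumes "\<And>v. (\<Phi> has_vector_derivative \<Phi>' v) (at v)"
  shows "GF_learnable \<Phi> \<subseteq> range \<Phi> \<union> {Lim at_bot \<Phi>, Lim at_top \<Phi>}"
proof
  fix f
  assume "f \<in> GF_learnable \<Phi>"
  then consider "f \<in> range \<Phi>" | "(\<Phi> \<longlongrightarrow> f) at_bot" | "(\<Phi> \<longlongrightarrow> f) at_top"
    using GF_learnable_cases[OF assms] by blast
  then show "f \<in> range \<Phi> \<union> {Lim at_bot \<Phi>, Lim at_top \<Phi>}"
    by cases (simp_all add: tendsto_Lim)
qed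

lemma negligible_GF_learnable:
  fixes \<Psi> \<Psi>' :: "real \<Rightarrow> 'a::euclidean_space"
  assumes "DIM('a) \<ge> 2"
    and d\<Psi>: "\<And>v. (\<Psi> has_vector_derivative \<Psi>' v) (at v)"
  shows "negligible (GF_learnable \<Psi>)"
proof -
  have "\<Psi> differentiable_on UNIV"
    using d\<Psi> unfolding differentiable_on_def has_vector_derivative_def differentiable_def by blast
  then have "negligible (range \<Psi>)"
    using assms(1) by (intro negligible_differentiable_image_lowdim) auto
  then have "negligible (range \<Psi> \<union> {Lim at_bot \<Psi>, Lim at_top \<Psi>})"
    by (rule negligible_Un) (auto intro: negligible_finite)
  then show ?thesis
    using GF_learnable_subset[OF d\<Psi>] by (rule negligible_subset)
qed

theorem proposition1:
  fixes \<Phi> \<Phi>' :: "real \<Rightarrow> 'a::{real_inner,complete_space}" and f :: 'a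
  assumes "\<And>v. (\<Phi> has_vector_derivative \<Phi>' v) (at v)"
    and "\<exists>C. C-lipschitz_on UNIV \<Phi>'"
    and "f \<in> GF_learnable \<Phi>"
  shows "((\<exists>v. f = \<Phi> v) \<or> (\<Phi> \<longlongrightarrow> f) at_bot \<or> (\<Phi> \<longlongrightarrow> f) at_top)
    \<and> (\<forall>(\<Psi>::real \<Rightarrow> real^'n) \<Psi>'. CARD('n) \<ge> 2 \<longrightarrow>
          (\<forall>v. (\<Psi> has_vector_derivative \<Psi>' v) (at v)) \<longrightarrow>
          (\<exists>C. C-lipschitz_on UNIV \<Psi>') \<longrightarrow>
          GF_learnable \<Psi> \<in> null_sets lebesgue)"
  using GF_learnable_cases[OF assms(1,3)] negligible_GF_learnable[where 'a="real^'n"]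
  by (auto simp: negligible_iff_null_sets)

end
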